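(* Assume $S\times M\neq\emptyset$, let $(x,\lambda):[t_0,+\infty[\ \to X\times Y$ be a solution of (AHT), suppose there exists $t_+\ge t_0$ such that $\varepsilon^2(t)+\dot\varepsilon(t)\ge0$ and $2\varepsilon(t)\dot\varepsilon(t)+\ddot\varepsilon(t)\le0$ for all $t\ge t_+$, and suppose there exists $\alpha>0$ with $\|T(x,\lambda)-T(\xi,\eta)\|^2\ge\alpha\|(x,\lambda)-(\xi,\eta)\|^2$ for all $(x,\lambda),(\xi,\eta)\in X\times Y$. Then for $(\bar x,\bar\lambda)\in S\times M$, \[ \|(x(t),\lambda(t))-(\bar x,\bar\lambda)\|^2=\mathcal{O}\big(e^{-2\rho(t)}+\varepsilon^2(t)\big)\quad\text{as } t\to+\infty. \]
   Context: $X,Y$ are real Hilbert spaces; $X\times Y$ carries the product inner product and norm $\|\cdot\|$. Standing assumptions: $f:X\to\mathbb{R}$ is convex and continuously differentiable with $\nabla f$ Lipschitz continuous on bounded subsets of $X$; $A:X\to Y$ is linear and continuous with adjoint $A^*$; $b\in Y$; $\varepsilon:[t_0,+\infty[\ \to\ ]0,+\infty[$ ($t_0\ge0$) is twice continuously differentiable with $\lim_{t\to+\infty}\varepsilon(t)=0$. $L(x,\lambda)=f(x)+\langle\lambda,Ax-b\rangle_Y$ and $T(x,\lambda)=(\nabla f(x)+A^*\lambda,\ b-Ax)$. $S$ is the set of optimal solutions of $\min\{f(x):Ax=b\}$, $M$ the set of Lagrange multipliers; $S\times M$ is the set of saddle points of $L$, equal to the zero set of $T$. $\rho(t)=\int_{t_0}^t\varepsilon(\tau)\,d\tau$.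 (AHT) is the system $\dot x+\nabla f(x)+A^*\lambda+\varepsilon(t)x=0$, $\dot\lambda+b-Ax+\varepsilon(t)\lambda=0$; a solution is a continuously differentiable $(x,\lambda):[t_0,+\infty[\ \to X\times Y$ satisfying it on $[t_0,+\infty[$ (existence and uniqueness for every initial datum is assumed). *)

theory Defs
  imports "HOL-Analysis.Analysis" "HOL-Library.Landau_Symbols"
begin

definition opt_set :: "('x \<Rightarrow> real) \<Rightarrow> ('x \<Rightarrow> 'y) \<Rightarrow> 'y \<Rightarrow> 'x set" where
  "opt_set f A b = {x. A x = b \<and> (\<forall>z. A z = b \<longrightarrow> f x \<le> f z)}"

definition mult_set :: "('x::real_vector \<Rightarrow> real) \<Rightarrow> ('x \<Rightarrow> 'x) \<Rightarrow> ('x \<Rightarrow> 'y) \<Rightarrow> ('y \<Rightarrow> 'x) \<Rightarrow> 'y \<Rightarrow> 'y set" where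
  "mult_set f gradf A Astar b = {lam. \<exists>xb\<in>opt_set f A b. gradf xb + Astar lam = 0}"

definition Top :: "('x::real_vector \<Rightarrow> 'x) \<Rightarrow> ('x \<Rightarrow> 'y::real_vector) \<Rightarrow> ('y \<Rightarrow> 'x) \<Rightarrow> 'y \<Rightarrow> 'x \<times> 'y \<Rightarrow> 'x \<times> 'y" where
  "Top gradf A Astar b z = (gradf (fst z) + Astar (snd z), b - A (fst z))"

end

theory Submission
  imports Defs
begin

(* With z = (x, lam), (AHT) is the flow z' = -(T z + eps z) for the operator T = Top, which is
   monotone (convexity of f, while the adjoint pairing cancels the off-diagonal terms), Lipschitz on
   bounded sets, and vanishes at the saddle point zb. Monotonicity makes
   exp rho * (|z - zb|^2 - |zb|^2) nonincreasing, so the trajectory is bounded. For the velocity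
   v = z', the function exp (2 rho) * (|v|^2 + eps' |z|^2) has right Dini derivative at most
   exp (2 rho) * (2 eps eps' + eps'') |z|^2 <= 0, again by monotonicity of T. Together with
   eps^2 + eps' >= 0 this gives |v|^2 <= C exp (-2 rho) + B eps^2, and finally
   alpha |z - zb|^2 <= |T z - T zb|^2 = |v + eps z|^2. *)

section \<open>Upper right Dini derivatives\<close>

(* right_dini_le f t D says that the upper right Dini derivative of f at t is at most D. Such
   one-sided bounds are all we get for |z'|^2, since z' is only locally Lipschitz in time. *)
definition right_dini_le :: "(real \<Rightarrow> real) \<Rightarrow> real \<Rightarrow> real \<Rightarrow> bool" where
  "right_dini_le f t D \<longleftrightarrow> (\<exists>\<psi>. (\<psi> \<longlongrightarrow> D) (at_right 0) \<and>
      eventually (\<lambda>h. f (t + h) - f t \<le> h * \<psi> h) (at_right 0))"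

lemma filterlim_at_right_shift:
  assumes "c > 0" "{t..t+c} \<subseteq> S"
  shows "filterlim (\<lambda>h. t + h) (at t within S) (at_right (0::real))"
proof (subst filterlim_at, intro conjI)
  show "\<forall>\<^sub>F h in at_right 0. t + h \<in> S \<and> t + h \<noteq> t"
    using eventually_at_right_real[OF assms(1)] by eventually_elim (use assms(2) in auto)
  show "((\<lambda>h. t + h) \<longlongrightarrow> t) (at_right 0)"
    by (rule tendsto_eq_intros | simp)+
qed

lemma tendsto_at_right_shift:
  assumes "continuous_on {t0..} g" "t \<ge> t0"
  shows "((\<lambda>h. g (t + h)) \<longlongrightarrow> g t) (at_right (0::real))"
  using assms
  by (intro filterlim_compose[OF _ filterlim_at_right_shift[of 1]])
    (auto simp: continuous_on_eq_continuous_within continuous_within)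

lemma has_vector_derivative_right_quotient:
  fixes f :: "real \<Rightarrow> 'a::real_normed_vector"
  assumes "(f has_vector_derivative D) (at t within S)" "c > 0" "{t..t+c} \<subseteq> S"
  shows "((\<lambda>h. (f (t + h) - f t) /\<^sub>R h) \<longlongrightarrow> D) (at_right 0)"
proof -
  have "((\<lambda>y. ((f y - f t) - (y - t) *\<^sub>R D) /\<^sub>R norm (y - t)) \<longlongrightarrow> 0) (at t within S)"
    using assms(1) unfolding has_vector_derivative_def has_derivative_at_within by blast
  from filterlim_compose[OF this filterlim_at_right_shift[OF assms(2,3)]]
  have "((\<lambda>h. ((f (t + h) - f t) - h *\<^sub>R D) /\<^sub>R norm h + D) \<longlongrightarrow> D) (at_right 0)"
    using tendsto_add[OF _ tendsto_const[of D]] by fastforce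
  moreover have "\<forall>\<^sub>F h in at_right 0. ((f (t + h) - f t) - h *\<^sub>R D) /\<^sub>R norm h + D = (f (t + h) - f t) /\<^sub>R h"
    using eventually_at_right_less[of 0] by eventually_elim (simp add: scaleR_diff_right)
  ultimately show ?thesis
    by (rule Lim_transform_eventually)
qed

lemma has_real_derivative_right_quotient:
  assumes "(f has_real_derivative D) (at t within S)" "c > 0" "{t..t+c} \<subseteq> S"
  shows "((\<lambda>h. (f (t + h) - f t) / h) \<longlongrightarrow> D) (at_right 0)"
  using has_vector_derivative_right_quotient[of f D t S c] assms
  by (simp add: has_real_derivative_iff_has_vector_derivative divide_inverse_commute)

lemma right_dini_le_derivative:
  assumes "(f has_real_derivative D) (at t within S)" "c > 0" "{t..t+c} \<subseteq> S"
  shows "right_dini_le f t D"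
proof -
  have "eventually (\<lambda>h. f (t + h) - f t \<le> h * ((f (t + h) - f t) / h)) (at_right 0)"
    using eventually_at_right_less[of 0] by eventually_elim simp
  then show ?thesis
    unfolding right_dini_le_def using has_real_derivative_right_quotient[OF assms] by blast
qed

lemma right_dini_le_add:
  assumes "right_dini_le f t D" "right_dini_le g t E"
  shows "right_dini_le (\<lambda>s. f s + g s) t (D + E)"
proof -
  obtain \<psi> where \<psi>: "(\<psi> \<longlongrightarrow> D) (at_right 0)" "eventually (\<lambda>h. f (t + h) - f t \<le> h * \<psi> h) (at_right 0)"
    using assms(1) unfolding right_dini_le_def by blast
  obtain \<phi> where \<phi>: "(\<phi> \<longlongrightarrow> E) (at_right 0)" "eventually (\<lambda>h. g (t + h) - g t \<le> h * \<phi> h) (at_right 0)"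
    using assms(2) unfolding right_dini_le_def by blast
  have "eventually (\<lambda>h. (f (t + h) + g (t + h)) - (f t + g t) \<le> h * (\<psi> h + \<phi> h)) (at_right 0)"
    using \<psi>(2) \<phi>(2) by eventually_elim (simp add: distrib_left)
  then show ?thesis
    unfolding right_dini_le_def using tendsto_add[OF \<psi>(1) \<phi>(1)] by blast
qed

lemma right_dini_le_mult:
  assumes "right_dini_le g t G" "(e has_real_derivative E) (at t within S)" "c > 0" "{t..t+c} \<subseteq> S"
    and "eventually (\<lambda>h. e (t + h) \<ge> 0) (at_right 0)"
  shows "right_dini_le (\<lambda>s. e s * g s) t (e t * G + E * g t)"
proof -
  obtain \<psi> where \<psi>: "(\<psi> \<longlongrightarrow> G) (at_right 0)" "eventually (\<lambda>h. g (t + h) - g t \<le> h * \<psi> h) (at_right 0)"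
    using assms(1) unfolding right_dini_le_def by blast
  have "(e \<longlongrightarrow> e t) (at t within S)"
    using DERIV_continuous[OF assms(2)] by (simp add: continuous_within)
  from filterlim_compose[OF this filterlim_at_right_shift[OF assms(3,4)]]
  have "((\<lambda>h. e (t + h)) \<longlongrightarrow> e t) (at_right 0)" by simp
  then have "((\<lambda>h. e (t + h) * \<psi> h + (e (t + h) - e t) / h * g t) \<longlongrightarrow> e t * G + E * g t) (at_right 0)"
    by (intro tendsto_intros \<psi>(1) has_real_derivative_right_quotient[OF assms(2-4)])
  moreover have "eventually (\<lambda>h. e (t + h) * g (t + h) - e t * g t
      \<le> h * (e (t + h) * \<psi> h + (e (t + h) - e t) / h * g t)) (at_right 0)"
    using \<psi>(2) assms(5) eventually_at_right_less[of 0]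
  proof eventually_elim
    case (elim h)
    then have "e (t + h) * (g (t + h) - g t) \<le> e (t + h) * (h * \<psi> h)"
      by (intro mult_left_mono) auto
    moreover have "h * ((e (t + h) - e t) / h * g t) = (e (t + h) - e t) * g t"
      using elim by simp
    ultimately show ?case
      by (simp add: algebra_simps)
  qed
  ultimately show ?thesis
    unfolding right_dini_le_def by blast
qed

lemma right_dini_nonpos_imp_le_slope:
  fixes f :: "real \<Rightarrow> real"
  assumes "a \<le> b" "continuous_on {a..b} f" "\<And>t. t \<in> {a..<b} \<Longrightarrow> \<exists>D\<le>0. right_dini_le f t D"
    and "e > 0"
  shows "f b \<le> f a + e * (b - a)"
proof -
  \<comment> \<open>The last point of [a, b] where f lies below the line of slope e through (a, f a) is b.\<close>
  define g where "g u = f u - (f a + e * (u - a))" for u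
  define S where "S = {a..b} \<inter> g -` {..0}"
  have "closed S"
    unfolding S_def g_def by (intro continuous_closed_preimage continuous_intros assms(2))
  have "a \<in> S" "bdd_above S"
    using assms(1) by (auto simp: S_def g_def intro: bdd_aboveI[of _ b])
  define s where "s = Sup S"
  have "s \<in> S"
    unfolding s_def using \<open>closed S\<close> \<open>a \<in> S\<close> \<open>bdd_above S\<close> by (intro closed_contains_Sup) auto
  have "s = b"
  proof (rule ccontr)
    assume "s \<noteq> b"
    with \<open>s \<in> S\<close> have s: "a \<le> s" "s < b"
      by (auto simp: S_def)
    obtain D \<psi> where "D \<le> 0" "(\<psi> \<longlongrightarrow> D) (at_right 0)"
      and quot: "eventually (\<lambda>h. f (s + h) - f s \<le> h * \<psi> h) (at_right 0)"
      using assms(3)[of s] s unfolding right_dini_le_def by auto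
    then have "eventually (\<lambda>h. \<psi> h < e) (at_right 0)"
      using order_tendstoD(2) assms(4) by fastforce
    with quot eventually_at_right_real[of 0 "b - s"] s(2)
    have "eventually (\<lambda>h. f (s + h) - f s \<le> h * \<psi> h \<and> \<psi> h < e \<and> h \<in> {0<..<b - s}) (at_right 0)"
      by (auto elim: eventually_elim2[OF eventually_conj])
    then obtain h where h: "f (s + h) - f s \<le> h * \<psi> h" "\<psi> h < e" "0 < h" "h < b - s"
      using eventually_happens' trivial_limit_at_right_real by fastforce
    have "h * \<psi> h \<le> h * e"
      using h by (intro mult_left_mono) auto
    moreover have "f s \<le> f a + e * (s - a)"
      using \<open>s \<in> S\<close> by (simp add: S_def g_def)
    ultimately have "f (s + h) \<le> f a + e * (s + h - a)"
      using h(1) by (simp add: algebra_simps)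
    then have "s + h \<in> S"
      using h s by (simp add: S_def g_def)
    then have "s + h \<le> s"
      unfolding s_def using \<open>bdd_above S\<close> by (rule cSup_upper)
    then show False
      using h by simp
  qed
  then show ?thesis
    using \<open>s \<in> S\<close> by (simp add: S_def g_def)
qed

lemma right_dini_nonpos_imp_le:
  fixes f :: "real \<Rightarrow> real"
  assumes "a \<le> b" "continuous_on {a..b} f" "\<And>t. t \<in> {a..<b} \<Longrightarrow> \<exists>D\<le>0. right_dini_le f t D"
  shows "f b \<le> f a"
proof (rule field_le_epsilon)
  fix e :: real
  assume "e > 0"
  then have "f b \<le> f a + e / (b - a + 1) * (b - a)"
    using assms by (intro right_dini_nonpos_imp_le_slope) auto
  also have "\<dots> \<le> f a + e"
    using assms(1) \<open>e > 0\<close> by (simp add: field_simps)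
  finally show "f b \<le> f a + e" .
qed

section \<open>Regularized flows of monotone operators\<close>

lemma norm_power2_has_real_derivative:
  fixes f :: "real \<Rightarrow> 'a::real_inner"
  assumes "(f has_vector_derivative f') (at t within S)"
  shows "((\<lambda>s. (norm (f s))\<^sup>2) has_real_derivative 2 * inner (f t) f') (at t within S)"
proof -
  have d: "(f has_derivative (\<lambda>h. h *\<^sub>R f')) (at t within S)"
    using assms by (simp add: has_vector_derivative_def)
  have "((\<lambda>s. inner (f s) (f s)) has_derivative (*) (2 * inner (f t) f')) (at t within S)"
    by (rule has_derivative_eq_rhs[OF has_derivative_inner[OF d d]]) (auto simp: inner_commute algebra_simps)
  then show ?thesis
    unfolding has_field_derivative_def power2_norm_eq_inner .
qed

lemma norm_add_power2_le:
  fixes x y :: "'a::real_normed_vector"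
  shows "(norm (x + y))\<^sup>2 \<le> 2 * (norm x)\<^sup>2 + 2 * (norm y)\<^sup>2"
proof -
  have "(norm (x + y))\<^sup>2 \<le> (norm x + norm y)\<^sup>2"
    by (simp add: norm_triangle_ineq power_mono)
  also have "\<dots> \<le> 2 * (norm x)\<^sup>2 + 2 * (norm y)\<^sup>2"
    using zero_le_power2[of "norm x - norm y"] by (simp add: power2_eq_square algebra_simps)
  finally show ?thesis .
qed

(* Monotonicity disposes of the term (2/h) <T p - T q, p - q>; along the flow (p - q)/h tends to
   -(T q + c q), so the factor multiplying the Lipschitz constant tends to 0. *)
lemma monotone_shifted_norm_power2_increment:
  fixes T :: "'a::real_inner \<Rightarrow> 'a" and a c :: real
  assumes mono: "inner (T p - T q) (p - q) \<ge> 0" and lip: "norm (T p - T q) \<le> L * norm (p - q)"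
    and "h > 0"
  defines "W \<equiv> (T p + a *\<^sub>R p) + (T q + c *\<^sub>R q)"
  shows "(norm (T p + a *\<^sub>R p))\<^sup>2 - (norm (T q + c *\<^sub>R q))\<^sup>2
    \<le> L * norm (p - q) * norm (W + (2 / h) *\<^sub>R (p - q)) + inner (a *\<^sub>R p - c *\<^sub>R q) W"
proof -
  have "(norm (T p + a *\<^sub>R p))\<^sup>2 - (norm (T q + c *\<^sub>R q))\<^sup>2
      = inner (T p - T q) (W + (2 / h) *\<^sub>R (p - q)) - (2 / h) * inner (T p - T q) (p - q)
        + inner (a *\<^sub>R p - c *\<^sub>R q) W"
    unfolding W_def power2_norm_eq_inner
    by (simp add: inner_add_left inner_add_right inner_diff_left inner_diff_right inner_commute)
  also have "\<dots> \<le> norm (T p - T q) * norm (W + (2 / h) *\<^sub>R (p - q)) + inner (a *\<^sub>R p - c *\<^sub>R q) W"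
    using norm_cauchy_schwarz[of "T p - T q" "W + (2 / h) *\<^sub>R (p - q)"]
      mult_nonneg_nonneg[OF _ mono, of "2 / h"] \<open>h > 0\<close>
    by simp
  also have "\<dots> \<le> L * norm (p - q) * norm (W + (2 / h) *\<^sub>R (p - q)) + inner (a *\<^sub>R p - c *\<^sub>R q) W"
    using lip by (simp add: mult_right_mono)
  finally show ?thesis .
qed

(* (AHT) is the instance T = Top on X x Y of the flow z' + T z + eps z = 0. *)
locale regularized_monotone_flow =
  fixes T :: "'a::real_inner \<Rightarrow> 'a"
    and eps eps' eps'' :: "real \<Rightarrow> real"
    and t0 :: real
    and z :: "real \<Rightarrow> 'a"
  assumes monotone: "\<And>p q. inner (T p - T q) (p - q) \<ge> 0"
    and lipschitz_on_bounded: "\<And>B. bounded B \<Longrightarrow> \<exists>L. L-lipschitz_on B T"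
    and eps_pos: "\<And>t. t \<ge> t0 \<Longrightarrow> eps t > 0"
    and eps_deriv: "\<And>t. t \<ge> t0 \<Longrightarrow> (eps has_real_derivative eps' t) (at t within {t0..})"
    and eps'_deriv: "\<And>t. t \<ge> t0 \<Longrightarrow> (eps' has_real_derivative eps'' t) (at t within {t0..})"
    and flow: "\<And>t. t \<ge> t0 \<Longrightarrow>
      (z has_vector_derivative - (T (z t) + eps t *\<^sub>R z t)) (at t within {t0..})"
begin

definition velocity :: "real \<Rightarrow> 'a" where
  "velocity t = - (T (z t) + eps t *\<^sub>R z t)"

definition rho :: "real \<Rightarrow> real" where
  "rho t = integral {t0..t} eps"

definition velocity_energy :: "real \<Rightarrow> real" where
  "velocity_energy t = (norm (velocity t))\<^sup>2 + eps' t * (norm (z t))\<^sup>2"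

lemma z_has_vector_derivative: "t \<ge> t0 \<Longrightarrow> (z has_vector_derivative velocity t) (at t within {t0..})"
  using flow by (simp add: velocity_def)

lemma continuous_on_T: "continuous_on UNIV T"
proof -
  have "isCont T p" for p
  proof -
    obtain L where "L-lipschitz_on (ball p 1) T"
      using lipschitz_on_bounded[of "ball p 1"] by auto
    then have "continuous_on (ball p 1) T"
      by (rule lipschitz_on_continuous_on)
    then show ?thesis
      by (simp add: continuous_on_eq_continuous_at)
  qed
  then show ?thesis
    by (simp add: continuous_at_imp_continuous_on)
qed

lemma continuous_on_z: "continuous_on {t0..} z"
  using z_has_vector_derivative
  by (auto simp: continuous_on_eq_continuous_within intro: has_vector_derivative_continuous)

lemma continuous_on_eps: "continuous_on {t0..} eps"
  using eps_deriv by (auto simp: continuous_on_eq_continuous_within intro: DERIV_continuous)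

lemma continuous_on_eps': "continuous_on {t0..} eps'"
  using eps'_deriv by (auto simp: continuous_on_eq_continuous_within intro: DERIV_continuous)

lemma continuous_on_velocity: "continuous_on {t0..} velocity"
  unfolding velocity_def[abs_def]
  by (intro continuous_intros continuous_on_compose2[OF continuous_on_T continuous_on_z]
      continuous_on_z continuous_on_eps) auto

lemma rho_has_real_derivative:
  "t0 \<le> t \<Longrightarrow> t \<le> s \<Longrightarrow> (rho has_real_derivative eps t) (at t within {t0..s})"
  unfolding rho_def[abs_def]
  by (rule integral_has_real_derivative) (auto intro: continuous_on_subset[OF continuous_on_eps])

lemma continuous_on_rho: "continuous_on {t0..s} rho"
  using rho_has_real_derivative[of _ s]
  by (auto simp: continuous_on_eq_continuous_within intro!: DERIV_continuous)

lemma rho_nonneg: "t \<ge> t0 \<Longrightarrow> rho t \<ge> 0"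
  unfolding rho_def using eps_pos
  by (intro integral_nonneg integrable_continuous_real continuous_on_subset[OF continuous_on_eps])
    (auto simp: less_imp_le)

lemma dist_power2_derivative_le:
  assumes "T zb = 0" "t \<ge> t0"
  shows "2 * inner (z t - zb) (velocity t) \<le> - eps t * ((norm (z t - zb))\<^sup>2 - (norm zb)\<^sup>2)"
proof -
  have split: "2 * inner (z t - zb) (velocity t)
      = - 2 * inner (T (z t) - T zb) (z t - zb) - eps t * (2 * inner (z t - zb) (z t))"
    using assms(1) by (simp add: velocity_def inner_diff_left inner_diff_right inner_commute algebra_simps)
  have "2 * inner (z t - zb) (z t) = (norm (z t - zb))\<^sup>2 - (norm zb)\<^sup>2 + (norm (z t))\<^sup>2"
    by (simp add: power2_norm_eq_inner inner_diff_left inner_diff_right inner_commute)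
  then have "eps t * ((norm (z t - zb))\<^sup>2 - (norm zb)\<^sup>2) \<le> eps t * (2 * inner (z t - zb) (z t))"
    using eps_pos[OF assms(2)] by (intro mult_left_mono) auto
  then show ?thesis
    using split monotone[of "z t" zb] by linarith
qed

lemma dist_power2_bounded:
  assumes "T zb = 0" "s \<ge> t0"
  shows "(norm (z s - zb))\<^sup>2 \<le> (norm zb)\<^sup>2 + \<bar>(norm (z t0 - zb))\<^sup>2 - (norm zb)\<^sup>2\<bar>"
proof -
  define r where "r t = (norm (z t - zb))\<^sup>2 - (norm zb)\<^sup>2" for t
  have "exp (rho s) * r s \<le> exp (rho t0) * r t0"
  proof (rule right_dini_nonpos_imp_le[OF assms(2)])
    show "continuous_on {t0..s} (\<lambda>t. exp (rho t) * r t)"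
      unfolding r_def
      by (intro continuous_intros continuous_on_rho continuous_on_subset[OF continuous_on_z]) auto
  next
    fix t assume t: "t \<in> {t0..<s}"
    have "((\<lambda>u. z u - zb) has_vector_derivative velocity t) (at t within {t0..})"
      using has_vector_derivative_diff[OF z_has_vector_derivative has_vector_derivative_const, of t zb] t
      by simp
    from DERIV_diff[OF norm_power2_has_real_derivative[OF this] DERIV_const]
    have "(r has_real_derivative 2 * inner (z t - zb) (velocity t)) (at t within {t0..})"
      unfolding r_def[abs_def] by simp
    then have "right_dini_le r t (2 * inner (z t - zb) (velocity t))"
      by (rule right_dini_le_derivative[of _ _ _ _ 1]) (use t in auto)
    moreover have "((\<lambda>u. exp (rho u)) has_real_derivative exp (rho t) * eps t) (at t within {t0..s})"
      using t by (auto intro!: derivative_eq_intros rho_has_real_derivative)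
    ultimately have "right_dini_le (\<lambda>u. exp (rho u) * r u) t
        (exp (rho t) * (2 * inner (z t - zb) (velocity t)) + exp (rho t) * eps t * r t)"
      by (rule right_dini_le_mult[of _ _ _ _ _ _ "s - t"]) (use t in auto)
    moreover have "exp (rho t) * (2 * inner (z t - zb) (velocity t)) + exp (rho t) * eps t * r t \<le> 0"
      using mult_left_mono[OF dist_power2_derivative_le[OF assms(1), of t], of "exp (rho t)"] t
      by (simp add: r_def algebra_simps)
    ultimately show "\<exists>D\<le>0. right_dini_le (\<lambda>u. exp (rho u) * r u) t D"
      by blast
  qed
  then have "exp (rho s) * r s \<le> r t0"
    by (simp add: rho_def)
  moreover have "r s \<le> exp (rho s) * r s \<or> r s \<le> 0"
    using rho_nonneg[OF assms(2)] by (cases "r s \<le> 0") auto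
  ultimately have "r s \<le> \<bar>r t0\<bar>"
    by linarith
  then show ?thesis
    by (simp add: r_def)
qed

lemma trajectory_bounded:
  assumes "T zb = 0"
  obtains B where "B \<ge> 0" "\<And>t. t \<ge> t0 \<Longrightarrow> (norm (z t))\<^sup>2 \<le> B"
proof
  show "(norm (z t))\<^sup>2 \<le> 4 * (norm zb)\<^sup>2 + 2 * \<bar>(norm (z t0 - zb))\<^sup>2 - (norm zb)\<^sup>2\<bar>" if "t \<ge> t0" for t
    using norm_add_power2_le[of "z t - zb" zb] dist_power2_bounded[OF assms that] by simp
qed simp

lemma norm_velocity: "norm (velocity t) = norm (T (z t) + eps t *\<^sub>R z t)"
  by (simp only: velocity_def norm_minus_cancel)

lemma velocity_norm_power2_increment_le:
  assumes L: "L-lipschitz_on (ball (z t) 1) T" and "z (t + h) \<in> ball (z t) 1" "h > 0"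
  defines "dz \<equiv> (z (t + h) - z t) /\<^sub>R h"
    and "de \<equiv> (eps (t + h) *\<^sub>R z (t + h) - eps t *\<^sub>R z t) /\<^sub>R h"
    and "W \<equiv> velocity (t + h) + velocity t"
  shows "(norm (velocity (t + h)))\<^sup>2 - (norm (velocity t))\<^sup>2
    \<le> h * (L * norm dz * norm (2 *\<^sub>R dz - W) - inner de W)"
proof -
  define U where "U = (T (z (t + h)) + eps (t + h) *\<^sub>R z (t + h)) + (T (z t) + eps t *\<^sub>R z t)"
  have "norm (T (z (t + h)) - T (z t)) \<le> L * norm (z (t + h) - z t)"
    using lipschitz_on_normD[OF L] assms(2) by simp
  from monotone_shifted_norm_power2_increment[OF monotone this \<open>h > 0\<close>, of "eps (t + h)" "eps t"]
  have "(norm (velocity (t + h)))\<^sup>2 - (norm (velocity t))\<^sup>2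
      \<le> L * norm (z (t + h) - z t) * norm (U + (2 / h) *\<^sub>R (z (t + h) - z t))
        + inner (eps (t + h) *\<^sub>R z (t + h) - eps t *\<^sub>R z t) U"
    by (simp only: norm_velocity U_def)
  moreover have "norm (z (t + h) - z t) = h * norm dz"
    "(2 / h) *\<^sub>R (z (t + h) - z t) = 2 *\<^sub>R dz"
    "eps (t + h) *\<^sub>R z (t + h) - eps t *\<^sub>R z t = h *\<^sub>R de"
    using \<open>h > 0\<close> by (simp_all add: dz_def de_def divide_inverse)
  moreover have "W = - U"
    by (simp add: W_def U_def velocity_def)
  then have "h * (L * norm dz * norm (2 *\<^sub>R dz - W) - inner de W)
      = L * (h * norm dz) * norm (U + 2 *\<^sub>R dz) + inner (h *\<^sub>R de) U"
    by (simp add: add.commute distrib_left mult_ac)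
  ultimately show ?thesis
    by simp
qed

lemma velocity_norm_power2_right_dini:
  assumes "t \<ge> t0"
  shows "right_dini_le (\<lambda>s. (norm (velocity s))\<^sup>2) t
    (- 2 * eps t * (norm (velocity t))\<^sup>2 - 2 * eps' t * inner (z t) (velocity t))"
proof -
  obtain L where L: "L-lipschitz_on (ball (z t) 1) T"
    using lipschitz_on_bounded[of "ball (z t) 1"] by auto
  have nbhd: "{t..t + 1} \<subseteq> {t0..}"
    using assms by auto
  define dz where "dz h = (z (t + h) - z t) /\<^sub>R h" for h
  define de where "de h = (eps (t + h) *\<^sub>R z (t + h) - eps t *\<^sub>R z t) /\<^sub>R h" for h
  define W where "W h = velocity (t + h) + velocity t" for h
  define \<psi> where "\<psi> h = L * norm (dz h) * norm (2 *\<^sub>R dz h - W h) - inner (de h) (W h)" for h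
  have "(dz \<longlongrightarrow> velocity t) (at_right 0)"
    unfolding dz_def
    using has_vector_derivative_right_quotient[OF z_has_vector_derivative[OF assms] zero_less_one nbhd] .
  moreover have "(de \<longlongrightarrow> eps t *\<^sub>R velocity t + eps' t *\<^sub>R z t) (at_right 0)"
    unfolding de_def
    by (rule has_vector_derivative_right_quotient[OF _ zero_less_one nbhd])
      (rule has_vector_derivative_scaleR[OF eps_deriv[OF assms] z_has_vector_derivative[OF assms]])
  moreover have "(W \<longlongrightarrow> velocity t + velocity t) (at_right 0)"
    unfolding W_def by (intro tendsto_intros tendsto_at_right_shift[OF continuous_on_velocity assms])
  ultimately have "(\<psi> \<longlongrightarrow> L * norm (velocity t) * norm (2 *\<^sub>R velocity t - (velocity t + velocity t))
      - inner (eps t *\<^sub>R velocity t + eps' t *\<^sub>R z t) (velocity t + velocity t)) (at_right 0)"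
    unfolding \<psi>_def[abs_def] by (intro tendsto_intros)
  moreover have "L * norm (velocity t) * norm (2 *\<^sub>R velocity t - (velocity t + velocity t))
      - inner (eps t *\<^sub>R velocity t + eps' t *\<^sub>R z t) (velocity t + velocity t)
      = - 2 * eps t * (norm (velocity t))\<^sup>2 - 2 * eps' t * inner (z t) (velocity t)"
    by (simp add: scaleR_2 inner_add_left inner_add_right power2_norm_eq_inner inner_commute algebra_simps)
  ultimately have "(\<psi> \<longlongrightarrow> - 2 * eps t * (norm (velocity t))\<^sup>2 - 2 * eps' t * inner (z t) (velocity t))
      (at_right 0)"
    by simp
  moreover have "eventually (\<lambda>h. z (t + h) \<in> ball (z t) 1) (at_right 0)"
    using tendstoD[OF tendsto_at_right_shift[OF continuous_on_z assms] zero_less_one]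
    by eventually_elim (simp add: dist_commute)
  then have "eventually (\<lambda>h. (norm (velocity (t + h)))\<^sup>2 - (norm (velocity t))\<^sup>2 \<le> h * \<psi> h) (at_right 0)"
    using eventually_at_right_less[of 0]
  proof eventually_elim
    case (elim h)
    then show ?case
      unfolding \<psi>_def dz_def de_def W_def by (intro velocity_norm_power2_increment_le[OF L]) auto
  qed
  ultimately show ?thesis
    unfolding right_dini_le_def by blast
qed

lemma velocity_energy_decreasing:
  assumes "tp \<ge> t0" and decay: "\<And>t. t \<ge> tp \<Longrightarrow> 2 * eps t * eps' t + eps'' t \<le> 0" and "s \<ge> tp"
  shows "exp (2 * rho s) * velocity_energy s \<le> exp (2 * rho tp) * velocity_energy tp"
proof (rule right_dini_nonpos_imp_le[OF assms(3)])
  have "{tp..s} \<subseteq> {t0..}" "{tp..s} \<subseteq> {t0..s}"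
    using assms(1) by auto
  then show "continuous_on {tp..s} (\<lambda>t. exp (2 * rho t) * velocity_energy t)"
    unfolding velocity_energy_def
    by (intro continuous_intros continuous_on_subset[OF continuous_on_rho]
        continuous_on_subset[OF continuous_on_velocity] continuous_on_subset[OF continuous_on_z]
        continuous_on_subset[OF continuous_on_eps'])
next
  fix t assume t: "t \<in> {tp..<s}"
  then have "t \<ge> t0"
    using assms(1) by simp
  have "((\<lambda>s. eps' s * (norm (z s))\<^sup>2) has_real_derivative
      eps' t * (2 * inner (z t) (velocity t)) + eps'' t * (norm (z t))\<^sup>2) (at t within {t0..})"
    using DERIV_mult'[OF eps'_deriv norm_power2_has_real_derivative[OF z_has_vector_derivative]]
      \<open>t \<ge> t0\<close> by blast
  then have "right_dini_le (\<lambda>s. eps' s * (norm (z s))\<^sup>2) t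
      (eps' t * (2 * inner (z t) (velocity t)) + eps'' t * (norm (z t))\<^sup>2)"
    by (rule right_dini_le_derivative[of _ _ _ _ 1]) (use \<open>t \<ge> t0\<close> in auto)
  from right_dini_le_add[OF velocity_norm_power2_right_dini[OF \<open>t \<ge> t0\<close>] this]
  have "right_dini_le velocity_energy t (- 2 * eps t * (norm (velocity t))\<^sup>2
      + eps'' t * (norm (z t))\<^sup>2)"
    unfolding velocity_energy_def[abs_def] by (simp add: algebra_simps)
  moreover have "((\<lambda>u. exp (2 * rho u)) has_real_derivative exp (2 * rho t) * (2 * eps t))
      (at t within {t0..s})"
    using t \<open>t \<ge> t0\<close> by (auto intro!: derivative_eq_intros rho_has_real_derivative)
  ultimately have "right_dini_le (\<lambda>u. exp (2 * rho u) * velocity_energy u) t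
      (exp (2 * rho t) * (- 2 * eps t * (norm (velocity t))\<^sup>2 + eps'' t * (norm (z t))\<^sup>2)
        + exp (2 * rho t) * (2 * eps t) * velocity_energy t)"
    by (rule right_dini_le_mult[of _ _ _ _ _ _ "s - t"]) (use t \<open>t \<ge> t0\<close> in auto)
  moreover have "exp (2 * rho t) * (- 2 * eps t * (norm (velocity t))\<^sup>2 + eps'' t * (norm (z t))\<^sup>2)
        + exp (2 * rho t) * (2 * eps t) * velocity_energy t
      = exp (2 * rho t) * ((2 * eps t * eps' t + eps'' t) * (norm (z t))\<^sup>2)"
    by (simp add: velocity_energy_def algebra_simps)
  moreover have "exp (2 * rho t) * ((2 * eps t * eps' t + eps'' t) * (norm (z t))\<^sup>2) \<le> 0"
    using decay[of t] t by (intro mult_nonneg_nonpos mult_nonpos_nonneg) auto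
  ultimately show "\<exists>D\<le>0. right_dini_le (\<lambda>u. exp (2 * rho u) * velocity_energy u) t D"
    by auto
qed

lemma velocity_norm_power2_le:
  assumes "tp \<ge> t0" and growth: "\<And>t. t \<ge> tp \<Longrightarrow> (eps t)\<^sup>2 + eps' t \<ge> 0"
    and decay: "\<And>t. t \<ge> tp \<Longrightarrow> 2 * eps t * eps' t + eps'' t \<le> 0"
    and bound: "\<And>t. t \<ge> t0 \<Longrightarrow> (norm (z t))\<^sup>2 \<le> B" and "t \<ge> tp"
  shows "(norm (velocity t))\<^sup>2
    \<le> \<bar>exp (2 * rho tp) * velocity_energy tp\<bar> * exp (- 2 * rho t) + B * (eps t)\<^sup>2"
proof -
  have "exp (2 * rho t) * velocity_energy t \<le> \<bar>exp (2 * rho tp) * velocity_energy tp\<bar>"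
    using velocity_energy_decreasing[OF assms(1) decay \<open>t \<ge> tp\<close>] by linarith
  then have "velocity_energy t \<le> \<bar>exp (2 * rho tp) * velocity_energy tp\<bar> * exp (- 2 * rho t)"
    by (simp add: exp_minus field_simps)
  moreover have "- eps' t * (norm (z t))\<^sup>2 \<le> (eps t)\<^sup>2 * (norm (z t))\<^sup>2"
    using growth[OF \<open>t \<ge> tp\<close>] by (intro mult_right_mono) auto
  moreover have "(eps t)\<^sup>2 * (norm (z t))\<^sup>2 \<le> (eps t)\<^sup>2 * B"
    using bound assms(1) \<open>t \<ge> tp\<close> by (intro mult_left_mono) auto
  ultimately show ?thesis
    unfolding velocity_energy_def by (simp add: mult.commute)
qed

theorem dist_power2_bigo:
  assumes "T zb = 0" "tp \<ge> t0"
    and growth: "\<And>t. t \<ge> tp \<Longrightarrow> (eps t)\<^sup>2 + eps' t \<ge> 0"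
    and decay: "\<And>t. t \<ge> tp \<Longrightarrow> 2 * eps t * eps' t + eps'' t \<le> 0"
    and "\<alpha> > 0" and strong: "\<And>p. \<alpha> * (norm (p - zb))\<^sup>2 \<le> (norm (T p - T zb))\<^sup>2"
  shows "(\<lambda>t. (norm (z t - zb))\<^sup>2) \<in> O[at_top](\<lambda>t. exp (- 2 * integral {t0..t} eps) + (eps t)\<^sup>2)"
proof -
  obtain B where "B \<ge> 0" and bound: "\<And>t. t \<ge> t0 \<Longrightarrow> (norm (z t))\<^sup>2 \<le> B"
    using trajectory_bounded[OF assms(1)] by blast
  define C where "C = \<bar>exp (2 * rho tp) * velocity_energy tp\<bar>"
  have "(norm (z t - zb))\<^sup>2 \<le> (2 * C + 4 * B) / \<alpha> * (exp (- 2 * rho t) + (eps t)\<^sup>2)" if "t \<ge> tp" for t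
  proof -
    have "T (z t) - T zb = - (velocity t + eps t *\<^sub>R z t)"
      using assms(1) by (simp add: velocity_def)
    then have "\<alpha> * (norm (z t - zb))\<^sup>2 \<le> (norm (velocity t + eps t *\<^sub>R z t))\<^sup>2"
      using strong[of "z t"] by (simp only: norm_minus_cancel)
    also have "\<dots> \<le> 2 * (norm (velocity t))\<^sup>2 + 2 * ((eps t)\<^sup>2 * (norm (z t))\<^sup>2)"
      using norm_add_power2_le[of "velocity t" "eps t *\<^sub>R z t"] by (simp add: power_mult_distrib)
    also have "\<dots> \<le> 2 * (C * exp (- 2 * rho t) + B * (eps t)\<^sup>2) + 2 * ((eps t)\<^sup>2 * B)"
      using velocity_norm_power2_le[OF assms(2) growth decay bound that] bound[of t] assms(2) that
      unfolding C_def by (intro add_mono mult_left_mono) auto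
    also have "\<dots> \<le> (2 * C + 4 * B) * (exp (- 2 * rho t) + (eps t)\<^sup>2)"
      using \<open>B \<ge> 0\<close> by (simp add: C_def algebra_simps)
    finally show ?thesis
      using \<open>\<alpha> > 0\<close> by (simp add: field_simps)
  qed
  then show ?thesis
    by (intro bigoI[where c = "(2 * C + 4 * B) / \<alpha>"] eventually_mono[OF eventually_ge_at_top[of tp]])
      (auto simp: rho_def add_nonneg_nonneg)
qed

end

section \<open>The saddle-point operator\<close>

lemma convex_on_gradient_inequality:
  fixes f :: "'a::real_inner \<Rightarrow> real"
  assumes convex: "convex_on UNIV f" and deriv: "(f has_derivative (\<lambda>h. inner g h)) (at u)"
  shows "f u + inner g (w - u) \<le> f w"
proof -
  define \<phi> where "\<phi> = (\<lambda>s::real. f (u + s *\<^sub>R (w - u)))"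
  have "convex_on UNIV \<phi>"
  proof (rule convex_onI)
    fix \<theta> s r :: real
    assume "\<theta> > 0" "\<theta> < 1"
    moreover have "u + ((1 - \<theta>) * s + \<theta> * r) *\<^sub>R (w - u)
        = (1 - \<theta>) *\<^sub>R (u + s *\<^sub>R (w - u)) + \<theta> *\<^sub>R (u + r *\<^sub>R (w - u))"
      by (simp add: algebra_simps)
    ultimately show "\<phi> ((1 - \<theta>) *\<^sub>R s + \<theta> *\<^sub>R r) \<le> (1 - \<theta>) * \<phi> s + \<theta> * \<phi> r"
      unfolding \<phi>_def using convex_onD[OF convex, of \<theta>] by simp
  qed simp
  moreover have "(\<phi> has_real_derivative inner g (w - u)) (at 0)"
  proof -
    have "((\<lambda>s. u + s *\<^sub>R (w - u)) has_derivative (\<lambda>s. s *\<^sub>R (w - u))) (at 0)"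
      by (auto intro!: derivative_eq_intros)
    from has_derivative_compose[OF this, of f "\<lambda>h. inner g h"] deriv
    have "(\<phi> has_derivative (\<lambda>s. s * inner g (w - u))) (at 0)"
      by (simp add: \<phi>_def o_def)
    then show ?thesis
      unfolding has_field_derivative_def by (simp add: mult.commute[of _ "inner g (w - u)"])
  qed
  ultimately have "\<phi> 1 - \<phi> 0 \<ge> inner g (w - u) * (1 - 0)"
    by (intro convex_on_imp_above_tangent) auto
  then show ?thesis
    by (simp add: \<phi>_def)
qed

lemma convex_on_gradient_monotone:
  fixes f :: "'a::real_inner \<Rightarrow> real"
  assumes "convex_on UNIV f" "\<And>u. (f has_derivative (\<lambda>h. inner (g u) h)) (at u)"
  shows "inner (g u - g w) (u - w) \<ge> 0"
  using convex_on_gradient_inequality[OF assms(1) assms(2)[of u], of w]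
    convex_on_gradient_inequality[OF assms(1) assms(2)[of w], of u]
  by (simp add: inner_diff_left inner_diff_right)

lemma adjoint_bounded_linear:
  fixes A :: "'a::real_inner \<Rightarrow> 'b::real_inner"
  assumes "bounded_linear A" and adj: "\<And>u v. inner (B v) u = inner v (A u)"
  shows "bounded_linear B"
proof -
  interpret A: bounded_linear A by fact
  obtain K where "K > 0" and K: "\<And>x. norm (A x) \<le> norm x * K"
    using A.pos_bounded by blast
  have B_eqI: "B v = y" if "\<And>u. inner (B v) u = inner y u" for v y
  proof -
    have "inner (B v - y) (B v - y) = 0"
      using that[of "B v - y"] by (simp add: inner_diff_left)
    then show ?thesis
      by simp
  qed
  show ?thesis
  proof (rule bounded_linear_intro)
    show "B (v + w) = B v + B w" for v w
      by (rule B_eqI) (simp add: adj inner_add_left)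
    show "B (r *\<^sub>R v) = r *\<^sub>R B v" for r v
      by (rule B_eqI) (simp add: adj)
    show "norm (B v) \<le> norm v * K" for v
    proof (cases "B v = 0")
      case False
      have "norm (B v) * norm (B v) = inner v (A (B v))"
        by (simp add: adj[symmetric] power2_norm_eq_inner[symmetric] power2_eq_square)
      also have "\<dots> \<le> norm v * (norm (B v) * K)"
        using norm_cauchy_schwarz[of v "A (B v)"] K[of "B v"] by (meson mult_left_mono norm_ge_zero order_trans)
      finally show ?thesis
        using False by (simp add: mult.commute mult.left_commute)
    qed (use \<open>K > 0\<close> in simp)
  qed
qed

lemma Top_monotone:
  fixes gradf :: "'x::real_inner \<Rightarrow> 'x" and A :: "'x \<Rightarrow> 'y::real_inner"
  assumes "convex_on UNIV f" "\<And>u. (f has_derivative (\<lambda>h. inner (gradf u) h)) (at u)"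
    and adj: "\<And>u v. inner (Astar v) u = inner v (A u)"
  shows "inner (Top gradf A Astar b p - Top gradf A Astar b q) (p - q) \<ge> 0"
proof -
  obtain p1 p2 q1 q2 where pq: "p = (p1, p2)" "q = (q1, q2)"
    by (cases p, cases q)
  have "inner (Astar p2 - Astar q2) (p1 - q1) = inner (p2 - q2) (A p1 - A q1)"
    by (simp add: inner_diff_left inner_diff_right adj)
  then have "inner (Top gradf A Astar b p - Top gradf A Astar b q) (p - q)
      = inner (gradf p1 - gradf q1) (p1 - q1)"
    by (simp add: pq Top_def inner_diff_left inner_diff_right inner_add_left inner_commute algebra_simps)
  then show ?thesis
    using convex_on_gradient_monotone[OF assms(1,2)] by simp
qed

lemma Top_lipschitz_on_bounded:
  fixes gradf :: "'x::real_inner \<Rightarrow> 'x" and A :: "'x \<Rightarrow> 'y::real_inner"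
  assumes gradf_lip: "\<And>B. bounded B \<Longrightarrow> \<exists>L. \<forall>u\<in>B. \<forall>v\<in>B. norm (gradf u - gradf v) \<le> L * norm (u - v)"
    and A: "bounded_linear A" and adj: "\<And>u v. inner (Astar v) u = inner v (A u)"
    and "bounded S"
  shows "\<exists>L. L-lipschitz_on S (Top gradf A Astar b)"
proof -
  have "bounded (fst ` S)"
    using bounded_linear_image[OF \<open>bounded S\<close> bounded_linear_fst] .
  then obtain L where L: "\<forall>u\<in>fst ` S. \<forall>v\<in>fst ` S. norm (gradf u - gradf v) \<le> L * norm (u - v)"
    using gradf_lip by presburger
  have gradf: "\<bar>L\<bar>-lipschitz_on (fst ` S) gradf"
  proof (rule lipschitz_onI)
    fix u v
    assume "u \<in> fst ` S" "v \<in> fst ` S"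
    then have "norm (gradf u - gradf v) \<le> L * norm (u - v)"
      using L by blast
    also have "\<dots> \<le> \<bar>L\<bar> * norm (u - v)"
      by (simp add: mult_right_mono)
    finally show "dist (gradf u) (gradf v) \<le> \<bar>L\<bar> * dist u v"
      by (simp add: dist_norm)
  qed simp
  obtain C where fst: "C-lipschitz_on S fst"
    using bounded_linear.lipschitz_boundE[OF bounded_linear_fst] .
  obtain C' where Astar: "C'-lipschitz_on S (\<lambda>z. Astar (snd z))"
    using bounded_linear.lipschitz_boundE[OF bounded_linear_compose[OF
        adjoint_bounded_linear[OF A adj] bounded_linear_snd]] .
  obtain C'' where A: "C''-lipschitz_on S (\<lambda>z. A (fst z))"
    using bounded_linear.lipschitz_boundE[OF bounded_linear_compose[OF A bounded_linear_fst]] .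
  show ?thesis
    unfolding Top_def[abs_def]
    by (rule exI, (rule lipschitz_on_Pair lipschitz_on_add lipschitz_on_diff lipschitz_on_constant
        lipschitz_on_compose2[OF fst gradf] Astar A)+)
qed

lemma Top_saddle_point_eq_0:
  fixes gradf :: "'x::real_inner \<Rightarrow> 'x" and A :: "'x \<Rightarrow> 'y::real_inner"
  assumes convex: "convex_on UNIV f" and grad: "\<And>u. (f has_derivative (\<lambda>h. inner (gradf u) h)) (at u)"
    and A: "bounded_linear A" and adj: "\<And>u v. inner (Astar v) u = inner v (A u)"
    and "xb \<in> opt_set f A b" "lb \<in> mult_set f gradf A Astar b"
  shows "Top gradf A Astar b (xb, lb) = 0"
proof -
  obtain xm where xm: "xm \<in> opt_set f A b" "gradf xm + Astar lb = 0"
    using assms(6) unfolding mult_set_def by auto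
  have feasible: "A xb = b" "A xm = b" and "f xb = f xm"
    using assms(5) xm(1) unfolding opt_set_def by (auto intro: order.antisym)
  define Lag where "Lag u = f u + inner lb (A u - b)" for u
  have "(Lag has_derivative (\<lambda>h. inner (gradf xb + Astar lb) h)) (at xb)"
  proof -
    have "(Lag has_derivative (\<lambda>h. inner (gradf xb) h + inner lb (A h - 0))) (at xb)"
      unfolding Lag_def[abs_def]
      by (intro has_derivative_add grad has_derivative_inner_right has_derivative_diff
          bounded_linear.has_derivative[OF A] has_derivative_ident has_derivative_const)
    then show ?thesis
      by (rule has_derivative_eq_rhs) (simp add: fun_eq_iff inner_add_left adj)
  qed
  moreover have "Lag xb \<le> Lag u" for u
  proof -
    have "inner (gradf xm) (u - xm) = - inner lb (A u - b)"
      using xm(2) feasible by (simp add: eq_neg_iff_add_eq_0[symmetric] adj inner_diff_right)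
    then show ?thesis
      using convex_on_gradient_inequality[OF convex grad, of xm u] feasible \<open>f xb = f xm\<close>
      by (simp add: Lag_def)
  qed
  ultimately have "(\<lambda>h. inner (gradf xb + Astar lb) h) = (\<lambda>h. 0)"
    by (intro has_derivative_local_min always_eventually) auto
  then have "gradf xb + Astar lb = 0"
    by (metis inner_eq_zero_iff)
  then show ?thesis
    by (simp add: Top_def feasible zero_prod_def)
qed

theorem corollary4p4:
  fixes f :: "'x::{real_inner,complete_space} \<Rightarrow> real"
    and gradf :: "'x \<Rightarrow> 'x"
    and A :: "'x \<Rightarrow> 'y::{real_inner,complete_space}"
    and Astar :: "'y \<Rightarrow> 'x"
    and b :: 'y
    and eps eps' eps'' :: "real \<Rightarrow> real"
    and t0 tp \<alpha> :: real
    and x :: "real \<Rightarrow> 'x" and lam :: "real \<Rightarrow> 'y"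
    and xb :: 'x and lb :: 'y
  assumes f_convex: "convex_on UNIV f"
    and f_grad: "\<And>u. (f has_derivative (\<lambda>h. inner (gradf u) h)) (at u)"
    and gradf_cont: "continuous_on UNIV gradf"
    and gradf_lip: "\<And>B. bounded B \<Longrightarrow> \<exists>L. \<forall>u\<in>B. \<forall>v\<in>B. norm (gradf u - gradf v) \<le> L * norm (u - v)"
    and A_lin: "bounded_linear A"
    and A_adj: "\<And>u v. inner (Astar v) u = inner v (A u)"
    and t0_nonneg: "t0 \<ge> 0"
    and eps_pos: "\<And>t. t \<ge> t0 \<Longrightarrow> eps t > 0"
    and eps_d1: "\<And>t. t \<ge> t0 \<Longrightarrow> (eps has_real_derivative eps' t) (at t within {t0..})"
    and eps_d2: "\<And>t. t \<ge> t0 \<Longrightarrow> (eps' has_real_derivative eps'' t) (at t within {t0..})"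
    and eps''_cont: "continuous_on {t0..} eps''"
    and eps_lim: "(eps \<longlongrightarrow> 0) at_top"
    and SM_nonempty: "opt_set f A b \<times> mult_set f gradf A Astar b \<noteq> {}"
    and sol_x: "\<And>t. t \<ge> t0 \<Longrightarrow>
        (x has_vector_derivative (- (gradf (x t) + Astar (lam t) + eps t *\<^sub>R x t))) (at t within {t0..})"
    and sol_lam: "\<And>t. t \<ge> t0 \<Longrightarrow>
        (lam has_vector_derivative (- (b - A (x t) + eps t *\<^sub>R lam t))) (at t within {t0..})"
    and tp: "tp \<ge> t0"
    and cond1: "\<And>t. t \<ge> tp \<Longrightarrow> (eps t)\<^sup>2 + eps' t \<ge> 0"
    and cond2: "\<And>t. t \<ge> tp \<Longrightarrow> 2 * eps t * eps' t + eps'' t \<le> 0"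
    and alpha_pos: "\<alpha> > 0"
    and T_cond: "\<And>z w. (norm (Top gradf A Astar b z - Top gradf A Astar b w))\<^sup>2 \<ge> \<alpha> * (norm (z - w))\<^sup>2"
    and saddle: "xb \<in> opt_set f A b" "lb \<in> mult_set f gradf A Astar b"
  shows "(\<lambda>t. (norm ((x t, lam t) - (xb, lb)))\<^sup>2)
           \<in> O[at_top](\<lambda>t. exp (- 2 * integral {t0..t} eps) + (eps t)\<^sup>2)"
proof -
  have "regularized_monotone_flow (Top gradf A Astar b) eps eps' eps'' t0 (\<lambda>t. (x t, lam t))"
  proof
    show "inner (Top gradf A Astar b p - Top gradf A Astar b q) (p - q) \<ge> 0" for p q
      by (rule Top_monotone[OF f_convex f_grad A_adj])
    show "\<exists>L. L-lipschitz_on B (Top gradf A Astar b)" if "bounded B" for B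
      by (rule Top_lipschitz_on_bounded[OF gradf_lip A_lin A_adj that])
    show "((\<lambda>t. (x t, lam t)) has_vector_derivative
        - (Top gradf A Astar b (x t, lam t) + eps t *\<^sub>R (x t, lam t))) (at t within {t0..})"
      if "t \<ge> t0" for t
      using has_vector_derivative_Pair[OF sol_x[OF that] sol_lam[OF that]] by (simp add: Top_def)
  qed (fact eps_pos eps_d1 eps_d2)+
  from regularized_monotone_flow.dist_power2_bigo[OF this
      Top_saddle_point_eq_0[OF f_convex f_grad A_lin A_adj saddle] tp cond1 cond2 alpha_pos T_cond]
  show ?thesis .
qed

end
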